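(* Let $(\varphi_A)_{A\subseteq\{1,\dots,m\}}$ be $\{0,1\}$-valued statistics of the form $\varphi_A=\max_{t\in[0,1]}\varphi_{A,t}$ with $\varphi_{A,t}\in\{0,1\}$. For $S\subseteq\{1,\dots,m\}$, $n\in\{0,\dots,|S|\}$, $t\in[0,1]$, let $\varphi_{S,n,t}=\min\{\varphi_{A,t}: A\subseteq\{1,\dots,m\},\ |A\cap S|=n\}$, and define $$\hat V^{\mathrm{SC1}}_\varphi(S)=\max\{n\in\{0,\dots,|S|\}:\max_{t\in[0,1]}\varphi_{S,n,t}=0\},\qquad \hat V^{\mathrm{SC2}}_\varphi(S)=\min_{t\in[0,1]}\max\{n\in\{0,\dots,|S|\}:\varphi_{S,n,t}=0\}.$$ Then for all $S\subseteq\{1,\dots,m\}$, $\hat V^{\mathrm{IP}}_\varphi(S)\le\hat V^{\mathrm{SC1}}_\varphi(S)\le\hat V^{\mathrm{SC2}}_\varphi(S)$.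
   Context: Inversion procedure bound: $\mathcal N_\varphi=\{A\subseteq\{1,\dots,m\}:\varphi_A=0\}$ and $\hat V^{\mathrm{IP}}_\varphi(S)=\max_{A\in\mathcal N_\varphi}|A\cap S|$. Convention: the maximum of an empty set of integers is $0$. *)

theory Defs
  imports Main "HOL.Real"
begin

definition maxz :: "nat set \<Rightarrow> nat" where
  "maxz X = (if X = {} then 0 else Max X)"

definition phiA :: "(nat set \<Rightarrow> real \<Rightarrow> nat) \<Rightarrow> nat set \<Rightarrow> nat" where
  "phiA phi A = Max ((\<lambda>t. phi A t) ` {0..1})"

definition phiSnt :: "(nat set \<Rightarrow> real \<Rightarrow> nat) \<Rightarrow> nat \<Rightarrow> nat set \<Rightarrow> nat \<Rightarrow> real \<Rightarrow> nat" where
  "phiSnt phi m S n t = Min {phi A t | A. A \<subseteq> {1..m} \<and> card (A \<inter> S) = n}"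

definition V_IP :: "(nat set \<Rightarrow> real \<Rightarrow> nat) \<Rightarrow> nat \<Rightarrow> nat set \<Rightarrow> nat" where
  "V_IP phi m S = maxz {card (A \<inter> S) | A. A \<subseteq> {1..m} \<and> phiA phi A = 0}"

definition V_SC1 :: "(nat set \<Rightarrow> real \<Rightarrow> nat) \<Rightarrow> nat \<Rightarrow> nat set \<Rightarrow> nat" where
  "V_SC1 phi m S = maxz {n. n \<le> card S \<and> Max ((\<lambda>t. phiSnt phi m S n t) ` {0..1}) = 0}"

definition V_SC2 :: "(nat set \<Rightarrow> real \<Rightarrow> nat) \<Rightarrow> nat \<Rightarrow> nat set \<Rightarrow> nat" where
  "V_SC2 phi m S = Min ((\<lambda>t. maxz {n. n \<le> card S \<and> phiSnt phi m S n t = 0}) ` {0..1})"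

end

theory Submission
  imports Defs
begin

text \<open>Every size |A \<inter> S| of a set A with phi_A = 0 is admissible for the first shortcut,
  and every size admissible for the first shortcut is admissible for the second one at each fixed
  t; so the candidate sets are nested and their maxima compare. The maxima over the infinite
  parameter set [0,1] are meaningful only because the statistics are binary, which makes the
  images finite.\<close>

lemma maxz_mono: "finite Y \<Longrightarrow> X \<subseteq> Y \<Longrightarrow> maxz X \<le> maxz Y"
  unfolding maxz_def by (auto intro: Max_mono)

lemma maxz_le: "X \<subseteq> {..k} \<Longrightarrow> maxz X \<le> k"
  unfolding maxz_def using finite_subset[OF _ finite_atMost] by (auto simp: Max_le_iff)

lemma Max_image_eq_0_iff:
  fixes f :: "'a \<Rightarrow> nat"
  assumes "finite (f ` T)" and "T \<noteq> {}"
  shows "Max (f ` T) = 0 \<longleftrightarrow> (\<forall>t\<in>T. f t = 0)"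
  using assms by (auto simp: Max_eq_iff)

lemma phiA_eq_0_iff:
  assumes "\<And>t. t \<in> {0..1} \<Longrightarrow> phi A t \<in> {0, 1}"
  shows "phiA phi A = 0 \<longleftrightarrow> (\<forall>t\<in>{0..1}. phi A t = 0)"
proof -
  have "(\<lambda>t. phi A t) ` {0..1} \<subseteq> {0, 1}"
    by (intro image_subsetI assms)
  then have "finite ((\<lambda>t. phi A t) ` {0..1})"
    by (rule finite_subset) simp
  then show ?thesis
    unfolding phiA_def by (rule Max_image_eq_0_iff) simp
qed

lemma phiSnt_le:
  assumes "A \<subseteq> {1..m}" and "card (A \<inter> S) = n"
  shows "phiSnt phi m S n t \<le> phi A t"
proof -
  have "finite {A. A \<subseteq> {1..m} \<and> card (A \<inter> S) = n}"
    by (rule finite_subset[of _ "Pow {1..m}"]) auto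
  then have "finite {phi A t | A. A \<subseteq> {1..m} \<and> card (A \<inter> S) = n}"
    by (simp add: setcompr_eq_image)
  then show ?thesis
    unfolding phiSnt_def using assms by (auto intro: Min_le)
qed

lemma phiSnt_le_1:
  assumes binary: "\<And>A t. A \<subseteq> {1..m} \<Longrightarrow> t \<in> {0..1} \<Longrightarrow> phi A t \<in> {0, 1}"
    and S: "S \<subseteq> {1..m}" and "n \<le> card S" and t: "t \<in> {0..1}"
  shows "phiSnt phi m S n t \<le> 1"
proof -
  have "finite S"
    using S finite_subset by blast
  then obtain B where B: "B \<subseteq> S" "card B = n"
    using \<open>n \<le> card S\<close> obtain_subset_with_card_n by metis
  then have "phiSnt phi m S n t \<le> phi B t"
    using S by (intro phiSnt_le) (auto simp: Int_absorb2)
  also have "\<dots> \<le> 1"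
    using binary[OF _ t, of B] B(1) S by fastforce
  finally show ?thesis .
qed

lemma Max_phiSnt_eq_0_iff:
  assumes "\<And>A t. A \<subseteq> {1..m} \<Longrightarrow> t \<in> {0..1} \<Longrightarrow> phi A t \<in> {0, 1}"
    and "S \<subseteq> {1..m}" and "n \<le> card S"
  shows "Max ((\<lambda>t. phiSnt phi m S n t) ` {0..1}) = 0 \<longleftrightarrow>
    (\<forall>t\<in>{0..1}. phiSnt phi m S n t = 0)"
proof -
  have "(\<lambda>t. phiSnt phi m S n t) ` {0..1} \<subseteq> {..1}"
    using phiSnt_le_1[OF assms] by auto
  then have "finite ((\<lambda>t. phiSnt phi m S n t) ` {0..1})"
    by (rule finite_subset) simp
  then show ?thesis
    by (rule Max_image_eq_0_iff) simp
qed

lemma V_IP_le_V_SC1: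
  assumes binary: "\<And>A t. A \<subseteq> {1..m} \<Longrightarrow> t \<in> {0..1} \<Longrightarrow> phi A t \<in> {0, 1}"
    and S: "S \<subseteq> {1..m}"
  shows "V_IP phi m S \<le> V_SC1 phi m S"
  unfolding V_IP_def V_SC1_def
proof (rule maxz_mono)
  show "finite {n. n \<le> card S \<and> Max ((\<lambda>t. phiSnt phi m S n t) ` {0..1}) = 0}"
    by (rule finite_subset[of _ "{..card S}"]) auto
  show "{card (A \<inter> S) | A. A \<subseteq> {1..m} \<and> phiA phi A = 0}
    \<subseteq> {n. n \<le> card S \<and> Max ((\<lambda>t. phiSnt phi m S n t) ` {0..1}) = 0}"
  proof clarify
    fix A assume A: "A \<subseteq> {1..m}" and "phiA phi A = 0"
    then have "\<forall>t\<in>{0..1}. phi A t = 0"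
      using binary phiA_eq_0_iff by blast
    then have "\<forall>t\<in>{0..1}. phiSnt phi m S (card (A \<inter> S)) t = 0"
      using phiSnt_le[OF A refl] by (metis le_zero_eq)
    moreover have "card (A \<inter> S) \<le> card S"
      using S by (intro card_mono) (auto dest: finite_subset)
    ultimately show "card (A \<inter> S) \<le> card S \<and>
      Max ((\<lambda>t. phiSnt phi m S (card (A \<inter> S)) t) ` {0..1}) = 0"
      using Max_phiSnt_eq_0_iff[of m phi S] binary S by blast
  qed
qed

lemma V_SC1_le_V_SC2:
  assumes binary: "\<And>A t. A \<subseteq> {1..m} \<Longrightarrow> t \<in> {0..1} \<Longrightarrow> phi A t \<in> {0, 1}"
    and S: "S \<subseteq> {1..m}"
  shows "V_SC1 phi m S \<le> V_SC2 phi m S"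
proof -
  let ?SC2_at = "\<lambda>t. maxz {n. n \<le> card S \<and> phiSnt phi m S n t = 0}"
  have "V_SC1 phi m S \<le> ?SC2_at t" if t: "t \<in> {0..1}" for t
    unfolding V_SC1_def
  proof (rule maxz_mono)
    show "finite {n. n \<le> card S \<and> phiSnt phi m S n t = 0}"
      by (rule finite_subset[of _ "{..card S}"]) auto
    show "{n. n \<le> card S \<and> Max ((\<lambda>t. phiSnt phi m S n t) ` {0..1}) = 0}
      \<subseteq> {n. n \<le> card S \<and> phiSnt phi m S n t = 0}"
      using Max_phiSnt_eq_0_iff[of m phi S] binary S t by blast
  qed
  moreover have "finite (?SC2_at ` {0..1})"
    by (rule finite_subset[of _ "{..card S}"]) (auto intro: maxz_le)
  ultimately show ?thesis
    unfolding V_SC2_def by (auto simp: Min_ge_iff)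
qed

theorem mainTheorem5:
  fixes phi :: "nat set \<Rightarrow> real \<Rightarrow> nat" and m :: nat and S :: "nat set"
  assumes binary: "\<And>A t. A \<subseteq> {1..m} \<Longrightarrow> t \<in> {0..1} \<Longrightarrow> phi A t \<in> {0, 1}"
    and S: "S \<subseteq> {1..m}"
  shows "V_IP phi m S \<le> V_SC1 phi m S \<and> V_SC1 phi m S \<le> V_SC2 phi m S"
  using V_IP_le_V_SC1[of m phi S] V_SC1_le_V_SC2[of m phi S] binary S by blast

end
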